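(* Let $s\in\mathbb{N}$, let $m\ge s-1$ be an integer and put $n=9m$. For arbitrary $w_1,\dots,w_s\in\mathbb{C}$, the shift-invariant subspace $X=X(w_1,\dots,w_s)$ admits a reproducing filter $\varphi^X\in\mathbb{C}_n(\mathbb{Z})$ such that $$\|\mathcal{F}_n[\varphi^X]\|_p\le \frac{\mathsf{c}_\star (18s)^{1/p}}{\sqrt{2n+1}}\quad\text{for all } p\in[1,+\infty],\qquad \mathsf{c}_\star:=2.16\pi^2+6.$$ In particular, $\|\mathcal{F}_n[\varphi^X]\|_\infty\le \frac{\mathsf{c}_\star}{\sqrt{2n+1}}$, $\|\mathcal{F}_n[\varphi^X]\|_2\le\frac{3\mathsf{c}_\star\sqrt{2s}}{\sqrt{2n+1}}$, and $\|\mathcal{F}_n[\varphi^X]\|_1\le\frac{18\mathsf{c}_\star s}{\sqrt{2n+1}}$.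
   Context: $\mathbb{C}(\mathbb{Z})$ is the space of two-sided complex sequences $x=(x_t)_{t\in\mathbb{Z}}$; $\mathbb{C}_n(\mathbb{Z})$ is the subspace of sequences with $x_t=0$ for $|t|>n$. The lag operator $\Delta$ acts by $(\Delta x)_t=x_{t-1}$. For $w_1,\dots,w_s\in\mathbb{C}$, $X(w_1,\dots,w_s)$ is the set of all $x\in\mathbb{C}(\mathbb{Z})$ solving $\mathsf{f}(\Delta)x=0$ where $\mathsf{f}(z)=\prod_{k=1}^s(1-w_kz)$ (an $s$-dimensional shift-invariant subspace). Convolution: $(u*v)_t=\sum_{\tau\in\mathbb{Z}}u_\tau v_{t-\tau}$. A filter $\varphi\in\mathbb{C}(\mathbb{Z})$ is reproducing for $X$ if $\varphi*x=x$ for all $x\in X$. With $[n]_\pm=\{-n,\dots,n\}$ and $\chi_{k,n}=\exp(i2\pi k/(2n+1))$, the DFT $\mathcal{F}_n:\mathbb{C}(\mathbb{Z})\to\mathbb{C}^{2n+1}$ (entries indexed $k=0,\dots,2n$) is $(\mathcal{F}_n[u])_k=(2n+1)^{-1/2}\sum_{\tau\in[n]_\pm}\chi_{k,n}^{-\tau}u_\tau$; $\|\cdot\|_p$ is the usual $\ell_p$-norm on $\mathbb{C}^{2n+1}$. *)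

theory Defs
  imports "HOL-Analysis.Analysis" "HOL-Computational_Algebra.Polynomial"
begin

type_synonym cseq = "int \<Rightarrow> complex"

definition Cn :: "nat \<Rightarrow> cseq set" where
  "Cn n = {x. \<forall>t. \<bar>t\<bar> > int n \<longrightarrow> x t = 0}"

definition lag :: "cseq \<Rightarrow> cseq" where
  "lag x = (\<lambda>t. x (t - 1))"

definition poly_lag :: "complex poly \<Rightarrow> cseq \<Rightarrow> cseq" where
  "poly_lag f x = (\<lambda>t. \<Sum>j\<le>degree f. coeff f j * (lag ^^ j) x t)"

text \<open>f(z) = prod_{k=1}^s (1 - w_k z); the w_k are indexed by k < s.\<close>
definition fpoly :: "nat \<Rightarrow> (nat \<Rightarrow> complex) \<Rightarrow> complex poly" where
  "fpoly s w = (\<Prod>k<s. [:1, - w k:])"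

definition Xsp :: "nat \<Rightarrow> (nat \<Rightarrow> complex) \<Rightarrow> cseq set" where
  "Xsp s w = {x. poly_lag (fpoly s w) x = (\<lambda>_. 0)}"

definition conv :: "cseq \<Rightarrow> cseq \<Rightarrow> cseq" where
  "conv u v = (\<lambda>t. \<Sum>\<^sub>\<infinity>\<tau>\<in>(UNIV::int set). u \<tau> * v (t - \<tau>))"

definition reproducing :: "cseq \<Rightarrow> cseq set \<Rightarrow> bool" where
  "reproducing \<phi> X \<longleftrightarrow> (\<forall>x\<in>X. conv \<phi> x = x)"

definition chi :: "nat \<Rightarrow> nat \<Rightarrow> complex" where
  "chi k n = exp (\<i> * 2 * of_real pi * of_nat k / of_nat (2*n+1))"

text \<open>DFT, entries indexed k = 0..2n.\<close>
definition DFT :: "nat \<Rightarrow> cseq \<Rightarrow> nat \<Rightarrow> complex" where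
  "DFT n u k = (\<Sum>\<tau>\<in>{-int n..int n}. chi k n powi (- \<tau>) * u \<tau>) / of_real (sqrt (real (2*n+1)))"

definition pnorm :: "nat \<Rightarrow> real \<Rightarrow> (nat \<Rightarrow> complex) \<Rightarrow> real" where
  "pnorm n p v = (\<Sum>k\<le>2*n. cmod (v k) powr p) powr (1/p)"

definition supnorm :: "nat \<Rightarrow> (nat \<Rightarrow> complex) \<Rightarrow> real" where
  "supnorm n v = Max ((\<lambda>k. cmod (v k)) ` {..2*n})"

definition c_star :: real where
  "c_star = 2.16 * pi^2 + 6"

end

theory Submission
  imports Defs
begin

(* The windows (x (t0), ..., x (t0 + n)) of the signals x in X all lie in one subspace V of
   C^(n+1) of dimension r <= s, because every x solves a linear recurrence of order
   deg f <= s. Let P be the orthogonal projector onto V and let phi be the average of P along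
   its diagonals, phi_sigma = (n+1)^-1 * sum_(i-t=sigma) P_it. As P fixes every window,
   (phi * x)_t is the average over i of (P window_(t-i))_i = x_t, so phi is reproducing.
   With e_k = (chi_k^u)_u, the k-th DFT coefficient of phi is |P e_k|^2 / ((n+1) sqrt(2n+1)):
   it lies in [0, 1/sqrt(2n+1)] because |e_k|^2 = n+1, and by Parseval for the
   (2n+1)-th roots of unity these coefficients sum to r(2n+1) / ((n+1) sqrt(2n+1)),
   which is less than 2s / sqrt(2n+1). Interpolating between the two bounds gives the
   l_p bounds. *)

(* Vectors of C^(n+1) are functions on nat of which only the entries 0..n are used. *)

definition inner_upto :: "nat \<Rightarrow> (nat \<Rightarrow> complex) \<Rightarrow> (nat \<Rightarrow> complex) \<Rightarrow> complex" where
  "inner_upto n u v = (\<Sum>i\<le>n. u i * cnj (v i))"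

definition sqnorm_upto :: "nat \<Rightarrow> (nat \<Rightarrow> complex) \<Rightarrow> real" where
  "sqnorm_upto n u = (\<Sum>i\<le>n. (cmod (u i))\<^sup>2)"

definition orthonormal_upto :: "nat \<Rightarrow> nat \<Rightarrow> (nat \<Rightarrow> nat \<Rightarrow> complex) \<Rightarrow> bool" where
  "orthonormal_upto n r b \<longleftrightarrow>
    (\<forall>j<r. \<forall>l<r. inner_upto n (b j) (b l) = (if j = l then 1 else 0))"

definition expands_upto ::
    "nat \<Rightarrow> nat \<Rightarrow> (nat \<Rightarrow> nat \<Rightarrow> complex) \<Rightarrow> (nat \<Rightarrow> complex) \<Rightarrow> bool" where
  "expands_upto n r b v \<longleftrightarrow> (\<forall>i\<le>n. v i = (\<Sum>j<r. inner_upto n v (b j) * b j i))"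

lemma inner_upto_cong:
  "(\<And>i. i \<le> n \<Longrightarrow> u i = u' i) \<Longrightarrow> (\<And>i. i \<le> n \<Longrightarrow> v i = v' i) \<Longrightarrow>
    inner_upto n u v = inner_upto n u' v'"
  unfolding inner_upto_def by (rule sum.cong) auto

lemma inner_upto_commute: "inner_upto n v u = cnj (inner_upto n u v)"
  unfolding inner_upto_def by (simp add: mult.commute)

lemma inner_upto_sum_left:
  "finite A \<Longrightarrow>
    inner_upto n (\<lambda>i. \<Sum>j\<in>A. c j * f j i) v = (\<Sum>j\<in>A. c j * inner_upto n (f j) v)"
  unfolding inner_upto_def by (simp add: sum_distrib_left sum_distrib_right mult.assoc sum.swap[of _ A])

lemma inner_upto_sum_right:
  "finite A \<Longrightarrow>
    inner_upto n u (\<lambda>i. \<Sum>j\<in>A. c j * f j i) = (\<Sum>j\<in>A. cnj (c j) * inner_upto n u (f j))"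
  unfolding inner_upto_def by (simp add: sum_distrib_left sum_distrib_right mult_ac sum.swap[of _ A])

lemma inner_upto_diff_left: "inner_upto n (\<lambda>i. u i - u' i) v = inner_upto n u v - inner_upto n u' v"
  unfolding inner_upto_def by (simp add: algebra_simps sum_subtractf)

lemma inner_upto_diff_right: "inner_upto n u (\<lambda>i. v i - v' i) = inner_upto n u v - inner_upto n u v'"
  unfolding inner_upto_def by (simp add: algebra_simps sum_subtractf)

lemma inner_upto_scale_left: "inner_upto n (\<lambda>i. u i * c) v = c * inner_upto n u v"
  unfolding inner_upto_def by (simp add: sum_distrib_left mult_ac)

lemma inner_upto_scale_right: "inner_upto n u (\<lambda>i. v i * c) = cnj c * inner_upto n u v"
  unfolding inner_upto_def by (simp add: sum_distrib_left mult_ac)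

lemma inner_upto_self: "inner_upto n u u = of_real (sqnorm_upto n u)"
  unfolding inner_upto_def sqnorm_upto_def of_real_sum
  by (intro sum.cong refl) (metis complex_norm_square)

lemma sqnorm_upto_nonneg: "sqnorm_upto n u \<ge> 0"
  unfolding sqnorm_upto_def by (simp add: sum_nonneg)

lemma sqnorm_upto_eq_0: "sqnorm_upto n u = 0 \<Longrightarrow> i \<le> n \<Longrightarrow> u i = 0"
  unfolding sqnorm_upto_def by (subst (asm) sum_nonneg_eq_0_iff) auto

lemma sum_orthonormal_upto_delta:
  assumes "orthonormal_upto n r b" "j < r"
  shows "(\<Sum>l<r. a l * inner_upto n (b l) (b j)) = a j"
proof -
  have "(\<Sum>l<r. a l * inner_upto n (b l) (b j)) = (\<Sum>l<r. if l = j then a l else 0)"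
    using assms by (intro sum.cong) (auto simp: orthonormal_upto_def)
  also have "\<dots> = a j" using assms(2) by simp
  finally show ?thesis .
qed

lemma expands_upto_sum:
  assumes "finite A" "\<And>l. l \<in> A \<Longrightarrow> expands_upto n r b (g l)"
  shows "expands_upto n r b (\<lambda>i. \<Sum>l\<in>A. a l * g l i)"
  unfolding expands_upto_def
proof (intro allI impI)
  fix i assume i: "i \<le> n"
  have "(\<Sum>l\<in>A. a l * g l i) = (\<Sum>l\<in>A. a l * (\<Sum>j<r. inner_upto n (g l) (b j) * b j i))"
    using assms(2) i by (intro sum.cong refl) (auto simp: expands_upto_def)
  also have "\<dots> = (\<Sum>j<r. inner_upto n (\<lambda>i. \<Sum>l\<in>A. a l * g l i) (b j) * b j i)"
    using assms(1)
    by (simp add: inner_upto_sum_left sum_distrib_left sum_distrib_right mult_ac sum.swap[of _ A])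
  finally show "(\<Sum>l\<in>A. a l * g l i) =
      (\<Sum>j<r. inner_upto n (\<lambda>i. \<Sum>l\<in>A. a l * g l i) (b j) * b j i)" .
qed

lemma expands_upto_Suc:
  assumes "orthonormal_upto n (Suc r) b" "expands_upto n r b v"
  shows "expands_upto n (Suc r) b v"
proof -
  have ob: "orthonormal_upto n r b"
    using assms(1) by (simp add: orthonormal_upto_def)
  have "inner_upto n v (b r) = inner_upto n (\<lambda>i. \<Sum>j<r. inner_upto n v (b j) * b j i) (b r)"
    using assms(2) by (intro inner_upto_cong) (auto simp: expands_upto_def)
  also have "\<dots> = 0"
    using assms(1) by (simp add: inner_upto_sum_left orthonormal_upto_def)
  finally show ?thesis
    using assms(2) by (simp add: expands_upto_def)
qed

lemma orthonormal_upto_extend: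
  assumes ob: "orthonormal_upto n r b"
    and orth: "\<And>j. j < r \<Longrightarrow> inner_upto n e (b j) = 0" and unit: "inner_upto n e e = 1"
  shows "orthonormal_upto n (Suc r) (b(r := e))"
  unfolding orthonormal_upto_def
proof (intro allI impI)
  fix j l assume "j < Suc r" "l < Suc r"
  then consider "j = r" "l = r" | "j = r" "l < r" | "j < r" "l = r" | "j < r" "l < r"
    by linarith
  then show "inner_upto n ((b(r := e)) j) ((b(r := e)) l) = (if j = l then 1 else 0)"
  proof cases
    case 3
    then show ?thesis using orth[of j] by (subst inner_upto_commute) simp
  qed (use ob orth unit in \<open>auto simp: orthonormal_upto_def\<close>)
qed

lemma gram_schmidt_step:
  assumes ob: "orthonormal_upto n r b"
  shows "expands_upto n r b v \<or>
    (\<exists>e. orthonormal_upto n (Suc r) (b(r := e)) \<and> expands_upto n (Suc r) (b(r := e)) v)"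
proof -
  define h where "h i = v i - (\<Sum>j<r. inner_upto n v (b j) * b j i)" for i
  have h_orth: "inner_upto n h (b j) = 0" if "j < r" for j
    unfolding h_def
    by (simp add: inner_upto_diff_left inner_upto_sum_left sum_orthonormal_upto_delta[OF ob that])
  have "inner_upto n h h = inner_upto n (\<lambda>i. v i - (\<Sum>j<r. inner_upto n v (b j) * b j i)) h"
    by (rule inner_upto_cong) (simp_all add: h_def)
  also have "\<dots> = inner_upto n v h"
    using h_orth
    by (simp add: inner_upto_diff_left inner_upto_sum_left inner_upto_commute[of n "b _" h])
  finally have vh: "inner_upto n v h = inner_upto n h h" ..
  show ?thesis
  proof (cases "sqnorm_upto n h = 0")
    case True
    then show ?thesis
      using sqnorm_upto_eq_0[of n h] by (simp add: expands_upto_def h_def)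
  next
    case False
    define \<kappa> :: complex where "\<kappa> = of_real (1 / sqrt (sqnorm_upto n h))"
    define e where "e = (\<lambda>i. h i * \<kappa>)"
    have \<kappa>_real: "cnj \<kappa> = \<kappa>" by (simp add: \<kappa>_def)
    have hh: "inner_upto n h h * \<kappa> * \<kappa> = 1"
      using False sqnorm_upto_nonneg[of n h]
      by (simp add: \<kappa>_def inner_upto_self field_simps flip: of_real_mult)
    have "orthonormal_upto n (Suc r) (b(r := e))"
    proof (rule orthonormal_upto_extend[OF ob])
      show "inner_upto n e (b j) = 0" if "j < r" for j
        using h_orth[OF that] by (simp add: e_def inner_upto_scale_left)
      show "inner_upto n e e = 1"
        using hh by (simp add: e_def inner_upto_scale_left inner_upto_scale_right \<kappa>_real)
          (simp add: mult_ac)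
    qed
    moreover have "expands_upto n (Suc r) (b(r := e)) v"
      unfolding expands_upto_def
    proof (intro allI impI)
      fix i assume "i \<le> n"
      have "inner_upto n v e * e i = inner_upto n h h * \<kappa> * \<kappa> * h i"
        using vh by (simp add: e_def inner_upto_scale_right \<kappa>_real)
      then have "(\<Sum>j<Suc r. inner_upto n v ((b(r := e)) j) * (b(r := e)) j i) =
          (\<Sum>j<r. inner_upto n v (b j) * b j i) + h i"
        using hh by simp
      then show "v i = (\<Sum>j<Suc r. inner_upto n v ((b(r := e)) j) * (b(r := e)) j i)"
        by (simp add: h_def)
    qed
    ultimately show ?thesis by blast
  qed
qed

lemma gram_schmidt_upto:
  fixes g :: "nat \<Rightarrow> nat \<Rightarrow> complex"
  shows "\<exists>r\<le>d. \<exists>b. orthonormal_upto n r b \<and> (\<forall>l<d. expands_upto n r b (g l))"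
proof (induction d)
  case 0
  show ?case by (auto simp: orthonormal_upto_def)
next
  case (Suc d)
  then obtain r b where "r \<le> d" and ob: "orthonormal_upto n r b"
    and exp: "\<forall>l<d. expands_upto n r b (g l)" by blast
  from gram_schmidt_step[OF ob, of "g d"] show ?case
  proof
    assume "expands_upto n r b (g d)"
    then show ?thesis
      using \<open>r \<le> d\<close> ob exp less_Suc_eq by (metis le_Suc_eq)
  next
    assume "\<exists>e. orthonormal_upto n (Suc r) (b(r := e)) \<and> expands_upto n (Suc r) (b(r := e)) (g d)"
    then obtain e where ob': "orthonormal_upto n (Suc r) (b(r := e))"
      and gd: "expands_upto n (Suc r) (b(r := e)) (g d)" by blast
    have "expands_upto n (Suc r) (b(r := e)) (g l)" if "l < Suc d" for l
    proof (cases "l = d")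
      case False
      with that exp have "expands_upto n r (b(r := e)) (g l)"
        by (simp add: expands_upto_def)
      then show ?thesis by (rule expands_upto_Suc[OF ob'])
    qed (use gd in simp)
    then show ?thesis using \<open>r \<le> d\<close> ob' by (metis Suc_le_mono)
  qed
qed

lemma bessel_upto:
  assumes ob: "orthonormal_upto n r b"
  shows "(\<Sum>j<r. (cmod (inner_upto n e (b j)))\<^sup>2) \<le> sqnorm_upto n e"
proof -
  define c where "c j = inner_upto n e (b j)" for j
  define S where "S = (\<Sum>j<r. (cmod (c j))\<^sup>2)"
  define P where "P i = (\<Sum>j<r. c j * b j i)" for i
  have cc: "cnj (c j) * c j = of_real ((cmod (c j))\<^sup>2)" for j
    by (metis complex_norm_square mult.commute)
  have eP: "inner_upto n e P = of_real S"
    unfolding P_def S_def by (simp add: inner_upto_sum_right c_def[symmetric] cc)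
  have Pb: "inner_upto n P (b j) = c j" if "j < r" for j
    unfolding P_def by (simp add: inner_upto_sum_left sum_orthonormal_upto_delta[OF ob that])
  have "inner_upto n P P = inner_upto n P (\<lambda>i. \<Sum>j<r. c j * b j i)"
    by (rule inner_upto_cong) (simp_all add: P_def)
  also have "\<dots> = of_real S"
    unfolding S_def by (simp add: inner_upto_sum_right Pb cc)
  finally have PP: "inner_upto n P P = of_real S" .
  have "of_real (sqnorm_upto n (\<lambda>i. e i - P i)) = (of_real (sqnorm_upto n e - S) :: complex)"
    by (simp add: inner_upto_self[symmetric] inner_upto_diff_left inner_upto_diff_right
        inner_upto_commute[of n P e] eP PP)
  then have "sqnorm_upto n e - S = sqnorm_upto n (\<lambda>i. e i - P i)"
    by (simp only: of_real_eq_iff)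
  then show ?thesis
    using sqnorm_upto_nonneg[of n "\<lambda>i. e i - P i"] unfolding S_def c_def by simp
qed

lemma chi_eq_cis: "chi k n = cis (2 * pi * real k / real (2*n+1))"
  unfolding chi_def cis_conv_exp by (simp add: mult_ac)

lemma norm_chi [simp]: "cmod (chi k n) = 1"
  by (simp add: chi_eq_cis)

lemma sum_chi_powi:
  "(\<Sum>k\<le>2*n. chi k n powi d) = (if int (2*n+1) dvd d then of_nat (2*n+1) else 0)"
proof -
  define N where "N = 2*n+1"
  define q where "q = cis (2 * pi * of_int d / real N)"
  have chi_q: "chi k n powi d = q ^ k" for k
    unfolding chi_eq_cis q_def cis_power_int Complex.DeMoivre N_def
    by (rule arg_cong[where f = cis]) (simp add: field_simps)
  have sum_q: "(\<Sum>k\<le>2*n. chi k n powi d) = (\<Sum>k<N. q ^ k)"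
    unfolding chi_q N_def by (intro sum.cong) auto
  have q_eq_1: "q = 1 \<longleftrightarrow> int N dvd d"
  proof
    assume "q = 1"
    have "cos (2 * pi * of_int d / real N) = Re q"
      by (simp add: q_def)
    with \<open>q = 1\<close> have "cos (2 * pi * of_int d / real N) = 1"
      by simp
    then obtain j :: int where "2 * pi * of_int d / real N = of_int j * 2 * pi"
      by (auto simp: cos_one_2pi_int)
    then have "2 * pi * real_of_int d = 2 * pi * real_of_int (j * int N)"
      by (simp add: N_def field_simps)
    then have "real_of_int d = real_of_int (j * int N)"
      by simp
    then show "int N dvd d" by (simp only: of_int_eq_iff) simp
  next
    assume "int N dvd d"
    then obtain j where "d = int N * j" by blast
    then have "q = cis (2 * pi * of_int j)"
      unfolding q_def by (intro arg_cong[where f = cis]) (simp add: N_def)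
    then show "q = 1" by simp
  qed
  have q_N: "q ^ N = 1"
  proof -
    have "q ^ N = cis (2 * pi * of_int d)"
      unfolding q_def Complex.DeMoivre by (intro arg_cong[where f = cis]) (simp add: N_def)
    then show ?thesis by simp
  qed
  show ?thesis
  proof (cases "int N dvd d")
    case True
    then show ?thesis using q_eq_1 by (simp add: sum_q N_def)
  next
    case False
    with q_eq_1 have "q \<noteq> 1" by simp
    then have "(\<Sum>k<N. q ^ k) = 0" using q_N by (simp add: geometric_sum)
    then show ?thesis using False by (simp add: sum_q N_def)
  qed
qed

lemma cnj_chi_power_mult: "cnj (chi k n) ^ i * chi k n ^ t = chi k n powi (int t - int i)"
proof -
  define a where "a = 2 * pi * real k / real (2*n+1)"
  have "cnj (chi k n) ^ i * chi k n ^ t = cis (- (real i * a) + real t * a)"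
    unfolding chi_eq_cis a_def[symmetric] cis_cnj Complex.DeMoivre cis_mult by (simp add: mult_ac)
  also have "\<dots> = chi k n powi (int t - int i)"
    unfolding chi_eq_cis a_def[symmetric] cis_power_int by (simp add: algebra_simps)
  finally show ?thesis .
qed

lemma sum_chi_powers_orthogonal:
  assumes "i \<le> n" "t \<le> n"
  shows "(\<Sum>k\<le>2*n. cnj (chi k n) ^ i * chi k n ^ t) = (if i = t then of_nat (2*n+1) else 0)"
proof -
  have "int (2*n+1) dvd int t - int i \<longleftrightarrow> i = t"
  proof
    assume dvd: "int (2*n+1) dvd int t - int i"
    show "i = t"
    proof (rule ccontr)
      assume "i \<noteq> t"
      then have "\<bar>int (2*n+1)\<bar> \<le> \<bar>int t - int i\<bar>"
        using dvd by (intro dvd_imp_le_int) auto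
      then show False using assms by linarith
    qed
  qed simp
  then show ?thesis
    unfolding cnj_chi_power_mult sum_chi_powi by simp
qed

lemma sqnorm_upto_chi_powers: "sqnorm_upto n (\<lambda>u. chi k n ^ u) = real (n+1)"
  by (simp add: sqnorm_upto_def norm_power)

lemma parseval_chi_powers:
  "(\<Sum>k\<le>2*n. (cmod (inner_upto n b (\<lambda>u. chi k n ^ u)))\<^sup>2) = real (2*n+1) * sqnorm_upto n b"
proof -
  define E where "E k u = chi k n ^ u" for k u
  have "of_real (\<Sum>k\<le>2*n. (cmod (inner_upto n b (E k)))\<^sup>2) =
      (\<Sum>k\<le>2*n. inner_upto n b (E k) * cnj (inner_upto n b (E k)))"
    unfolding of_real_sum by (intro sum.cong refl) (metis complex_norm_square)
  also have "\<dots> = (\<Sum>k\<le>2*n. \<Sum>i\<le>n. \<Sum>t\<le>n. b i * cnj (b t) * (cnj (E k i) * E k t))"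
    unfolding inner_upto_def by (simp add: sum_product mult_ac)
  also have "\<dots> = (\<Sum>i\<le>n. \<Sum>t\<le>n. b i * cnj (b t) * (\<Sum>k\<le>2*n. cnj (E k i) * E k t))"
    by (simp add: sum_distrib_left sum.swap[of _ "{..2*n}"])
  also have "\<dots> = (\<Sum>i\<le>n. b i * cnj (b i) * of_nat (2*n+1))"
    unfolding E_def
    by (intro sum.cong refl) (simp add: sum_chi_powers_orthogonal if_distrib cong: if_cong)
  also have "\<dots> = of_real (real (2*n+1) * sqnorm_upto n b)"
    by (simp add: inner_upto_self[symmetric] inner_upto_def sum_distrib_left mult_ac)
  finally show ?thesis unfolding E_def by (simp only: of_real_eq_iff)
qed

function lin_rec ::
    "(nat \<Rightarrow> 'a::comm_ring_1) \<Rightarrow> nat \<Rightarrow> (nat \<Rightarrow> 'a) \<Rightarrow> nat \<Rightarrow> 'a" where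
  "lin_rec c D a u = (if u < D then a u else - (\<Sum>j\<in>{1..D}. c j * lin_rec c D a (u - j)))"
  by auto
termination by (relation "Wellfounded.measure (\<lambda>(c, D, a, u). u)") auto

declare lin_rec.simps [simp del]

lemma lin_rec_unique:
  assumes "\<And>u. D \<le> u \<Longrightarrow> z u = - (\<Sum>j\<in>{1..D}. c j * z (u - j))"
  shows "z u = lin_rec c D z u"
proof (induction u rule: less_induct)
  case (less u)
  show ?case
  proof (cases "u < D")
    case False
    then have "z u = - (\<Sum>j\<in>{1..D}. c j * z (u - j))" using assms by simp
    also have "\<dots> = - (\<Sum>j\<in>{1..D}. c j * lin_rec c D z (u - j))"
      using False less by (intro arg_cong[where f = uminus] sum.cong refl) auto
    also have "\<dots> = lin_rec c D z u" using False by (subst (2) lin_rec.simps) simp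
    finally show ?thesis .
  qed (simp add: lin_rec.simps)
qed

lemma lin_rec_linear:
  "lin_rec c D a u = (\<Sum>l<D. a l * lin_rec c D (\<lambda>v. if v = l then 1 else 0) u)"
proof (induction u rule: less_induct)
  case (less u)
  show ?case
  proof (cases "u < D")
    case True
    then have "(\<Sum>l<D. a l * lin_rec c D (\<lambda>v. if v = l then 1 else 0) u) =
        (\<Sum>l<D. if l = u then a l else 0)"
      by (intro sum.cong refl) (auto simp: lin_rec.simps)
    with True show ?thesis by (simp add: lin_rec.simps)
  next
    case False
    have "lin_rec c D a u = - (\<Sum>j\<in>{1..D}. c j * lin_rec c D a (u - j))"
      using False by (simp add: lin_rec.simps)
    also have "\<dots> = - (\<Sum>j\<in>{1..D}. c j *
        (\<Sum>l<D. a l * lin_rec c D (\<lambda>v. if v = l then 1 else 0) (u - j)))"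
      using False less by (intro arg_cong[where f = uminus] sum.cong refl) auto
    also have "\<dots> = (\<Sum>l<D. a l *
        - (\<Sum>j\<in>{1..D}. c j * lin_rec c D (\<lambda>v. if v = l then 1 else 0) (u - j)))"
      by (simp add: sum_distrib_left sum_negf mult_ac) (rule sum.swap)
    also have "\<dots> = (\<Sum>l<D. a l * lin_rec c D (\<lambda>v. if v = l then 1 else 0) u)"
      using False by (simp add: lin_rec.simps[of c D _ u])
    finally show ?thesis .
  qed
qed

lemma lag_funpow: "(lag ^^ j) x t = x (t - int j)"
  by (induction j arbitrary: t) (auto simp: lag_def algebra_simps)

lemma coeff_fpoly_0: "coeff (fpoly s w) 0 = 1"
  by (simp add: poly_0_coeff_0[symmetric] fpoly_def poly_prod)

lemma degree_fpoly_le: "degree (fpoly s w) \<le> s"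
proof -
  have "degree (fpoly s w) \<le> sum (degree \<circ> (\<lambda>k. [:1, - w k:])) {..<s}"
    unfolding fpoly_def by (rule degree_prod_sum_le) simp
  also have "\<dots> \<le> (\<Sum>k<s. 1)"
    by (intro sum_mono) simp
  finally show ?thesis by simp
qed

lemma Xsp_recurrence:
  assumes "x \<in> Xsp s w"
  shows "x t = - (\<Sum>j\<in>{1..degree (fpoly s w)}. coeff (fpoly s w) j * x (t - int j))"
proof -
  let ?D = "degree (fpoly s w)" and ?c = "coeff (fpoly s w)"
  have "0 = (\<Sum>j\<le>?D. ?c j * x (t - int j))"
    using assms by (simp add: Xsp_def poly_lag_def lag_funpow fun_eq_iff)
  also have "\<dots> = x t + (\<Sum>j\<in>{1..?D}. ?c j * x (t - int j))"
    by (simp add: atMost_atLeast0 sum.atLeast_Suc_atMost coeff_fpoly_0)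
  finally show ?thesis by (simp add: eq_neg_iff_add_eq_0 add.commute)
qed

lemma Xsp_window_combination:
  assumes "x \<in> Xsp s w"
  defines "D \<equiv> degree (fpoly s w)" and "c \<equiv> coeff (fpoly s w)"
  shows "x (t0 + int i) =
    (\<Sum>l<D. x (t0 - int D + int l) * lin_rec c D (\<lambda>v. if v = l then 1 else 0) (D + i))"
proof -
  define z where "z u = x (t0 - int D + int u)" for u
  have rec: "z u = - (\<Sum>j\<in>{1..D}. c j * z (u - j))" if "D \<le> u" for u
  proof -
    have "z u = - (\<Sum>j\<in>{1..D}. c j * x (t0 - int D + int u - int j))"
      unfolding z_def c_def D_def by (rule Xsp_recurrence[OF assms(1)])
    also have "\<dots> = - (\<Sum>j\<in>{1..D}. c j * z (u - j))"
      using that unfolding z_def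
      by (intro arg_cong[where f = uminus] sum.cong refl) (auto simp: of_nat_diff algebra_simps)
    finally show ?thesis .
  qed
  have "x (t0 + int i) = z (D + i)" by (simp add: z_def)
  also have "\<dots> = lin_rec c D z (D + i)" using rec by (rule lin_rec_unique)
  also have "\<dots> = (\<Sum>l<D. z l * lin_rec c D (\<lambda>v. if v = l then 1 else 0) (D + i))"
    by (rule lin_rec_linear)
  finally show ?thesis unfolding z_def .
qed

lemma Xsp_windows_orthonormal_basis:
  obtains r b where "r \<le> s" "orthonormal_upto n r b"
    "\<And>x t0. x \<in> Xsp s w \<Longrightarrow> expands_upto n r b (\<lambda>u. x (t0 + int u))"
proof -
  define D where "D = degree (fpoly s w)"
  define g where "g l i = lin_rec (coeff (fpoly s w)) D (\<lambda>v. if v = l then 1 else 0) (D + i)" for l i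
  obtain r b where "r \<le> D" and ob: "orthonormal_upto n r b"
    and g_exp: "\<forall>l<D. expands_upto n r b (g l)"
    using gram_schmidt_upto[of D n g] by blast
  have "expands_upto n r b (\<lambda>u. x (t0 + int u))" if "x \<in> Xsp s w" for x t0
  proof -
    have window: "(\<lambda>u. x (t0 + int u)) = (\<lambda>u. \<Sum>l<D. x (t0 - int D + int l) * g l u)"
      unfolding g_def D_def by (rule ext) (rule Xsp_window_combination[OF that])
    show ?thesis
      unfolding window using g_exp by (intro expands_upto_sum) auto
  qed
  moreover have "r \<le> s"
    using \<open>r \<le> D\<close> degree_fpoly_le[of s w] by (simp add: D_def)
  ultimately show ?thesis using that ob by blast
qed

definition diag_filter :: "nat \<Rightarrow> (nat \<Rightarrow> nat \<Rightarrow> complex) \<Rightarrow> cseq" where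
  "diag_filter n F \<sigma> = (\<Sum>i\<le>n. \<Sum>t\<le>n. if int i - int t = \<sigma> then F i t else 0)"

lemma diag_filter_in_Cn: "diag_filter n F \<in> Cn n"
  unfolding Cn_def diag_filter_def by (auto intro!: sum.neutral)

lemma sum_diag_filter:
  "(\<Sum>\<sigma>\<in>{-int n..int n}. G \<sigma> * diag_filter n F \<sigma>) =
    (\<Sum>i\<le>n. \<Sum>t\<le>n. G (int i - int t) * F i t)"
proof -
  have "(\<Sum>\<sigma>\<in>{-int n..int n}. G \<sigma> * diag_filter n F \<sigma>) =
      (\<Sum>\<sigma>\<in>{-int n..int n}. \<Sum>i\<le>n. \<Sum>t\<le>n. if int i - int t = \<sigma> then G \<sigma> * F i t else 0)"
    unfolding diag_filter_def by (simp add: sum_distrib_left if_distrib cong: if_cong)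
  also have "\<dots> =
      (\<Sum>i\<le>n. \<Sum>t\<le>n. \<Sum>\<sigma>\<in>{-int n..int n}. if int i - int t = \<sigma> then G \<sigma> * F i t else 0)"
    by (subst sum.swap) (simp add: sum.swap[of _ "{-int n..int n}"])
  also have "\<dots> = (\<Sum>i\<le>n. \<Sum>t\<le>n. G (int i - int t) * F i t)"
    by (intro sum.cong refl) auto
  finally show ?thesis .
qed

lemma conv_diag_filter:
  "conv (diag_filter n F) x t = (\<Sum>i\<le>n. \<Sum>u\<le>n. x (t - (int i - int u)) * F i u)"
proof -
  have "conv (diag_filter n F) x t = (\<Sum>\<tau>\<in>{-int n..int n}. diag_filter n F \<tau> * x (t - \<tau>))"
    unfolding conv_def
    by (subst infsum_finite[symmetric], simp, rule infsum_cong_neutral)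
      (use diag_filter_in_Cn[of n F] in \<open>auto simp: Cn_def\<close>)
  also have "\<dots> = (\<Sum>i\<le>n. \<Sum>u\<le>n. x (t - (int i - int u)) * F i u)"
    by (subst sum_diag_filter[symmetric]) (simp add: mult.commute)
  finally show ?thesis .
qed

definition proj_filter :: "nat \<Rightarrow> nat \<Rightarrow> (nat \<Rightarrow> nat \<Rightarrow> complex) \<Rightarrow> cseq" where
  "proj_filter n r b = diag_filter n (\<lambda>i t. (\<Sum>j<r. b j i * cnj (b j t)) / of_nat (n+1))"

lemma reproducing_proj_filter:
  assumes "\<And>x t0. x \<in> X \<Longrightarrow> expands_upto n r b (\<lambda>u. x (t0 + int u))"
  shows "reproducing (proj_filter n r b) X"
  unfolding reproducing_def
proof (intro ballI ext)
  fix x t assume x: "x \<in> X"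
  have row: "(\<Sum>u\<le>n. x (t - (int i - int u)) * ((\<Sum>j<r. b j i * cnj (b j u)) / of_nat (n+1))) =
      x t / of_nat (n+1)" if "i \<le> n" for i
  proof -
    have "(\<Sum>u\<le>n. x (t - (int i - int u)) * ((\<Sum>j<r. b j i * cnj (b j u)) / of_nat (n+1))) =
        (\<Sum>j<r. inner_upto n (\<lambda>u. x (t - int i + int u)) (b j) * b j i) / of_nat (n+1)"
      unfolding inner_upto_def
      by (simp add: sum_distrib_left sum_distrib_right sum_divide_distrib mult_ac
          sum.swap[of _ "{..<r}"] algebra_simps)
    also have "(\<Sum>j<r. inner_upto n (\<lambda>u. x (t - int i + int u)) (b j) * b j i) =
        x (t - int i + int i)"
      using assms[OF x, of "t - int i"] that unfolding expands_upto_def by auto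
    finally show ?thesis by simp
  qed
  have "conv (proj_filter n r b) x t = (\<Sum>i\<le>n. x t / of_nat (n+1))"
    unfolding proj_filter_def conv_diag_filter by (intro sum.cong refl row) simp
  also have "\<dots> = x t"
    by (simp del: of_nat_Suc)
  finally show "conv (proj_filter n r b) x t = x t" .
qed

lemma DFT_proj_filter:
  "DFT n (proj_filter n r b) k =
    of_real ((\<Sum>j<r. (cmod (inner_upto n (b j) (\<lambda>u. chi k n ^ u)))\<^sup>2) /
      (real (n+1) * sqrt (real (2*n+1))))"
proof -
  define E where "E u = chi k n ^ u" for u
  have "(\<Sum>\<sigma>\<in>{-int n..int n}. chi k n powi (- \<sigma>) * proj_filter n r b \<sigma>) =
      (\<Sum>i\<le>n. \<Sum>t\<le>n. chi k n powi (int t - int i) * ((\<Sum>j<r. b j i * cnj (b j t)) / of_nat (n+1)))"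
    unfolding proj_filter_def sum_diag_filter by simp
  also have "\<dots> = (\<Sum>j<r. inner_upto n (b j) E * cnj (inner_upto n (b j) E)) / of_nat (n+1)"
    unfolding inner_upto_def E_def cnj_chi_power_mult[symmetric]
    by (simp add: sum_product sum_distrib_left sum_divide_distrib mult_ac sum.swap[of _ "{..<r}"])
      (rule sum.cong[OF refl], rule sum.swap)
  also have "(\<Sum>j<r. inner_upto n (b j) E * cnj (inner_upto n (b j) E)) =
      of_real (\<Sum>j<r. (cmod (inner_upto n (b j) E))\<^sup>2)"
    unfolding of_real_sum by (intro sum.cong refl) (metis complex_norm_square)
  finally show ?thesis
    unfolding DFT_def E_def by (simp add: divide_divide_eq_left)
qed

lemma norm_DFT_proj_filter:
  "cmod (DFT n (proj_filter n r b) k) =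
    (\<Sum>j<r. (cmod (inner_upto n (b j) (\<lambda>u. chi k n ^ u)))\<^sup>2) / (real (n+1) * sqrt (real (2*n+1)))"
  unfolding DFT_proj_filter norm_of_real by (intro abs_of_nonneg divide_nonneg_nonneg sum_nonneg) auto

lemma norm_DFT_proj_filter_le:
  assumes "orthonormal_upto n r b"
  shows "cmod (DFT n (proj_filter n r b) k) \<le> 1 / sqrt (real (2*n+1))"
proof -
  have "(\<Sum>j<r. (cmod (inner_upto n (b j) (\<lambda>u. chi k n ^ u)))\<^sup>2) =
      (\<Sum>j<r. (cmod (inner_upto n (\<lambda>u. chi k n ^ u) (b j)))\<^sup>2)"
    by (subst inner_upto_commute) simp
  also have "\<dots> \<le> real (n+1)"
    using bessel_upto[OF assms, of "\<lambda>u. chi k n ^ u"] by (simp add: sqnorm_upto_chi_powers)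
  finally show ?thesis
    unfolding norm_DFT_proj_filter by (simp add: divide_le_eq del: of_nat_Suc)
qed

lemma sum_norm_DFT_proj_filter:
  assumes "orthonormal_upto n r b"
  shows "(\<Sum>k\<le>2*n. cmod (DFT n (proj_filter n r b) k)) =
    real r * real (2*n+1) / (real (n+1) * sqrt (real (2*n+1)))"
proof -
  have "sqnorm_upto n (b j) = 1" if "j < r" for j
    using assms that inner_upto_self[of n "b j"] by (simp add: orthonormal_upto_def)
  then have "(\<Sum>j<r. \<Sum>k\<le>2*n. (cmod (inner_upto n (b j) (\<lambda>u. chi k n ^ u)))\<^sup>2) =
      real r * real (2*n+1)"
    by (simp add: parseval_chi_powers)
  then have "(\<Sum>k\<le>2*n. \<Sum>j<r. (cmod (inner_upto n (b j) (\<lambda>u. chi k n ^ u)))\<^sup>2) =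
      real r * real (2*n+1)"
    by (subst sum.swap)
  then show ?thesis
    unfolding norm_DFT_proj_filter by (simp only: sum_divide_distrib[symmetric])
qed

lemma sum_norm_DFT_proj_filter_le:
  assumes "orthonormal_upto n r b"
  shows "(\<Sum>k\<le>2*n. cmod (DFT n (proj_filter n r b) k)) \<le> 2 * real r / sqrt (real (2*n+1))"
proof -
  have "real r * real (2*n+1) \<le> real r * (2 * real (n+1))"
    by (intro mult_left_mono) auto
  then have "real r * real (2*n+1) / real (n+1) \<le> 2 * real r"
    by (simp add: divide_le_eq mult_ac del: of_nat_Suc)
  then show ?thesis
    unfolding sum_norm_DFT_proj_filter[OF assms]
    by (simp add: divide_right_mono flip: divide_divide_eq_left)
qed

lemma powr_le_mult_powr_minus_one:
  fixes x M p :: real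
  assumes "0 \<le> x" "x \<le> M" "1 \<le> p"
  shows "x powr p \<le> M powr (p - 1) * x"
proof (cases "x = 0")
  case False
  then have "x powr p = x powr (p - 1) * x"
    using powr_add[of x "p - 1" 1] assms(1) by simp
  also have "\<dots> \<le> M powr (p - 1) * x"
    using assms False by (intro mult_right_mono powr_mono2) auto
  finally show ?thesis .
qed (use assms in simp)

lemma pnorm_le:
  assumes "1 \<le> p" "0 \<le> S"
    and bound: "\<And>k. k \<le> 2*n \<Longrightarrow> cmod (v k) \<le> M"
    and sum_bound: "(\<Sum>k\<le>2*n. cmod (v k)) \<le> M * S"
  shows "pnorm n p v \<le> M * S powr (1/p)"
proof -
  have "0 \<le> M" using bound[of 0] by (meson norm_ge_zero order_trans zero_le)
  have "(\<Sum>k\<le>2*n. cmod (v k) powr p) \<le> (\<Sum>k\<le>2*n. M powr (p - 1) * cmod (v k))"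
    using assms by (intro sum_mono powr_le_mult_powr_minus_one) auto
  also have "\<dots> \<le> M powr (p - 1) * (M * S)"
    by (simp add: sum_distrib_left[symmetric] mult_left_mono sum_bound)
  also have "\<dots> = M powr p * S"
    using \<open>0 \<le> M\<close> assms(1) by (cases "M = 0") (simp_all add: powr_mult_base mult_ac)
  finally have "pnorm n p v \<le> (M powr p * S) powr (1/p)"
    unfolding pnorm_def using assms(1) by (intro powr_mono2) (auto intro: sum_nonneg)
  also have "\<dots> = M * S powr (1/p)"
    using \<open>0 \<le> M\<close> assms by (simp add: powr_mult powr_powr)
  finally show ?thesis .
qed

lemma one_le_c_star: "1 \<le> c_star"
  unfolding c_star_def by (simp add: add_increasing)

theorem proposition3:
  fixes s m n :: nat and w :: "nat \<Rightarrow> complex"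
  assumes "s - 1 \<le> m" and "n = 9 * m"
  shows "\<exists>\<phi> \<in> Cn n. reproducing \<phi> (Xsp s w) \<and>
           (\<forall>p::real. 1 \<le> p \<longrightarrow>
              pnorm n p (DFT n \<phi>) \<le> c_star * (18 * real s) powr (1/p) / sqrt (real (2*n+1))) \<and>
           supnorm n (DFT n \<phi>) \<le> c_star / sqrt (real (2*n+1))"
proof -
  obtain r b where "r \<le> s" and ob: "orthonormal_upto n r b"
    and windows: "\<And>x t0. x \<in> Xsp s w \<Longrightarrow> expands_upto n r b (\<lambda>u. x (t0 + int u))"
    using Xsp_windows_orthonormal_basis[where s = s and n = n and w = w] by blast
  define \<phi> where "\<phi> = proj_filter n r b"
  define M where "M = 1 / sqrt (real (2*n+1))"
  have bound: "cmod (DFT n \<phi> k) \<le> M" for k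
    unfolding \<phi>_def M_def by (rule norm_DFT_proj_filter_le[OF ob])
  have "2 * real r / sqrt (real (2*n+1)) \<le> M * (18 * real s)"
    using \<open>r \<le> s\<close> by (simp add: M_def divide_right_mono)
  then have sum_bound: "(\<Sum>k\<le>2*n. cmod (DFT n \<phi> k)) \<le> M * (18 * real s)"
    using sum_norm_DFT_proj_filter_le[OF ob] by (simp add: \<phi>_def)
  have c_star_M: "M * a \<le> c_star * a / sqrt (real (2*n+1))" if "0 \<le> a" for a
    using mult_right_mono[OF one_le_c_star that] by (simp add: M_def divide_right_mono)
  have "pnorm n p (DFT n \<phi>) \<le> c_star * (18 * real s) powr (1/p) / sqrt (real (2*n+1))"
    if "1 \<le> p" for p
    using pnorm_le[OF that _ bound sum_bound] c_star_M[of "(18 * real s) powr (1/p)"] by simp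
  moreover have "supnorm n (DFT n \<phi>) \<le> c_star / sqrt (real (2*n+1))"
    using bound c_star_M[of 1] by (auto simp: supnorm_def intro: order_trans)
  moreover have "\<phi> \<in> Cn n"
    unfolding \<phi>_def proj_filter_def by (rule diag_filter_in_Cn)
  moreover have "reproducing \<phi> (Xsp s w)"
    unfolding \<phi>_def using windows by (rule reproducing_proj_filter)
  ultimately show ?thesis by blast
qed

end
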